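(* Let $A$ be an abelian group equipped with pairwise commuting endomorphisms $\psi^k$ ($k>0$). Suppose there is a finite filtration $A=F^i\supset F^{i+1}\supset\cdots\supset F^j\supset F^{j+1}=0$ with $0\le i\le j$, by subgroups preserved by all $\psi^k$, such that $\psi^k$ acts on $F^p/F^{p+1}$ as multiplication by $k^p$. For $p\ge 0$ let $A^{(p)}=\{x\in A:\psi^kx=k^px\text{ for all }k>0\}$. Then: (i) for $i\le p\le j$, $(\prod_{q=i}^{p-1}w_{p-q})A^{(p)}\subseteq F^p$, and the induced map $\prod_{q=i}^{p-1}w_{p-q}\colon A^{(p)}\to F^p/F^{p+1}$ is a $(\prod_{q=i}^{j}w_{|p-q|})$-isomorphism; (ii) the canonical map $\bigoplus_{p=i}^jA^{(p)}\to A$ is a $(\prod_{i\le q,p\le j}w_{|p-q|})$-isomorphism.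
   Context: For $i\ge 0$: $w_0=1$; $w_i=2$ if $i$ is odd; and for $i$ positive even, $w_i$ is the denominator of $|B_{i/2}|/2i$, where $B_n$ is the $n$-th Bernoulli number. (For $i\ge1$ and $N$ large, $w_i=\gcd_{k\ge2}k^N(k^i-1)$.) For a positive integer $N$, a homomorphism of abelian groups is an $N$-isomorphism if its kernel and cokernel are both killed by $N$. *)

theory Defs
  imports Complex_Main "HOL-Library.Function_Algebras"
begin

fun bernoulli :: "nat \<Rightarrow> rat" where
  "bernoulli n = (if n = 0 then 1
     else - (1 / of_nat (n + 1)) * (\<Sum>k<n. of_nat ((n + 1) choose k) * bernoulli k))"

text \<open>The numbers w_i. For even i > 0 the paper's B_{i/2} (topologists' indexing,
  B_1 = 1/6, B_2 = 1/30, ...) is the classical |bernoulli i|.\<close>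
definition w :: "nat \<Rightarrow> nat" where
  "w i = (if i = 0 then 1 else if odd i then 2
          else nat (snd (quotient_of (\<bar>bernoulli i\<bar> / (2 * of_nat i)))))"

definition nsmul :: "nat \<Rightarrow> 'a::monoid_add \<Rightarrow> 'a" where
  "nsmul n x = (((+) x) ^^ n) 0"

definition is_subgroup :: "'a::ab_group_add set \<Rightarrow> bool" where
  "is_subgroup S \<longleftrightarrow> 0 \<in> S \<and> (\<forall>x\<in>S. \<forall>y\<in>S. x + y \<in> S) \<and> (\<forall>x\<in>S. - x \<in> S)"

text \<open>f is a homomorphism from the subgroup G to the quotient H/K (K \<subseteq> H subgroups)
  whose kernel and cokernel are killed by N.\<close>
definition N_iso :: "nat \<Rightarrow> 'a::ab_group_add set \<Rightarrow> 'b::ab_group_add set \<Rightarrow> 'b set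
                      \<Rightarrow> ('a \<Rightarrow> 'b) \<Rightarrow> bool" where
  "N_iso N G H K f \<longleftrightarrow>
     (\<forall>x\<in>G. f x \<in> H) \<and> (\<forall>x\<in>G. \<forall>y\<in>G. f (x + y) = f x + f y) \<and>
     (\<forall>x\<in>G. f x \<in> K \<longrightarrow> nsmul N x = 0) \<and>
     (\<forall>y\<in>H. \<exists>x\<in>G. nsmul N y - f x \<in> K)"

definition eigen :: "(nat \<Rightarrow> 'a \<Rightarrow> 'a::ab_group_add) \<Rightarrow> nat \<Rightarrow> 'a set" where
  "eigen \<psi> p = {x. \<forall>k>0. \<psi> k x = nsmul (k ^ p) x}"

end

theory Submission
  imports Defs "HOL-Number_Theory.Number_Theory"
begin

text \<open>
  For \<open>p \<noteq> q\<close> the number \<open>w\<^bsub>|p-q|\<^esub>\<close> is an integer combination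
  \<open>\<Sum>\<^sub>k c\<^sub>k (k\<^sup>p - k\<^sup>q)\<close>, so \<open>\<theta>\<^sub>p\<^sub>,\<^sub>q = \<Sum>\<^sub>k c\<^sub>k (\<psi>\<^sup>k - k\<^sup>q)\<close> is an endomorphism commuting
  with all \<open>\<psi>\<^sup>l\<close> which acts on \<open>F\<^sup>t/F\<^sup>t\<^sup>+\<^sup>1\<close> and on \<open>A\<^sup>(\<^sup>t\<^sup>)\<close> as multiplication by
  \<open>\<Sum>\<^sub>k c\<^sub>k (k\<^sup>t - k\<^sup>q)\<close>: by \<open>0\<close> for \<open>t = q\<close> and by \<open>w\<^bsub>|p-q|\<^esub>\<close> for \<open>t = p\<close>.
  Composing the \<open>\<theta>\<^sub>p\<^sub>,\<^sub>q\<close> over \<open>q < p\<close> carries \<open>A\<^sup>(\<^sup>p\<^sup>) \<subseteq> F\<^sup>i\<close> into \<open>F\<^sup>p\<close>; composing them over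
  \<open>q > p\<close> kills \<open>F\<^sup>p\<^sup>+\<^sup>1\<close> and so maps \<open>F\<^sup>p\<close> into \<open>A\<^sup>(\<^sup>p\<^sup>)\<close>, acting on \<open>F\<^sup>p/F\<^sup>p\<^sup>+\<^sup>1\<close> as a product
  of \<open>w\<close>'s; composing them over all \<open>q \<noteq> p\<close> annihilates \<open>A\<^sup>(\<^sup>t\<^sup>)\<close> for \<open>t \<noteq> p\<close>. These three
  operators bound the kernels and cokernels.

  The integer combination exists because the least positive integer combination \<open>d\<close> of
  the numbers \<open>k\<^sup>s (k\<^sup>m - 1)\<close> divides all of them, and every such common divisor divides
  \<open>w\<^sub>m\<close>. For a prime power \<open>p\<^sup>e\<close> dividing \<open>d\<close>, Carmichael's function
  \<open>\<lambda>(p\<^sup>e)\<close> divides \<open>m\<close>. If \<open>m\<close> is odd this forces \<open>p\<^sup>e = 2\<close>; if \<open>m\<close> is even it gives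
  \<open>(p - 1) dvd m\<close> and \<open>p\<^sup>e dvd 2pm\<close>, and \<open>p\<close> divides the denominator of \<open>B\<^sub>m\<close> by the
  von Staudt--Clausen congruence \<open>p B\<^sub>m \<equiv> -1 (mod p)\<close>, which follows from Faulhaber's formula.
\<close>

section \<open>Faulhaber's formula\<close>

declare bernoulli.simps [simp del]

lemma bernoulli_0 [simp]: "bernoulli 0 = 1"
  by (simp add: bernoulli.simps)

lemma bernoulli_recurrence:
  assumes "2 \<le> M"
  shows "(\<Sum>k<M. of_nat (M choose k) * bernoulli k) = 0"
proof -
  obtain n where M: "M = Suc n" and "0 < n"
    using assms by (cases M) auto
  then have "bernoulli n = - (1 / of_nat (n + 1)) * (\<Sum>k<n. of_nat ((n + 1) choose k) * bernoulli k)"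
    by (subst bernoulli.simps) simp
  then show ?thesis
    by (simp add: M field_simps)
qed

lemma choose_mult_symmetric:
  fixes n k l :: nat
  assumes "k + l \<le> n"
  shows "(n choose k) * ((n - k) choose l) = (n choose l) * ((n - l) choose k)"
proof -
  have "(n choose (k + l)) * ((k + l) choose k) = (n choose k) * ((n - k) choose l)"
    using choose_mult[of k "k + l" n] assms by simp
  moreover have "(n choose (k + l)) * ((k + l) choose l) = (n choose l) * ((n - l) choose k)"
    using choose_mult[of l "k + l" n] assms by simp
  ultimately show ?thesis
    using binomial_symmetric[of k "k + l"] by simp
qed

lemma sum_triangle_swap:
  fixes n :: nat
  shows "(\<Sum>k\<le>n. \<Sum>l\<le>n - k. h k l) = (\<Sum>l\<le>n. \<Sum>k\<le>n - l. (h k l :: 'a::comm_monoid_add))"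
proof -
  have "(\<Sum>k\<le>n. \<Sum>l\<le>n - k. h k l) = (\<Sum>k\<le>n. \<Sum>l\<in>{l. l \<in> {..n} \<and> k + l \<le> n}. h k l)"
    by (intro sum.cong refl) (auto intro: sum.cong)
  also have "\<dots> = (\<Sum>l\<le>n. \<Sum>k\<in>{k. k \<in> {..n} \<and> k + l \<le> n}. h k l)"
    by (rule sum.swap_restrict) auto
  also have "\<dots> = (\<Sum>l\<le>n. \<Sum>k\<le>n - l. h k l)"
    by (intro sum.cong refl) (auto intro: sum.cong)
  finally show ?thesis .
qed

lemma power_plus_1_eq:
  "(x + 1) ^ m = x ^ m + (\<Sum>l<m. of_nat (m choose l) * (x :: 'a::comm_semiring_1) ^ l)"
proof -
  have "(x + 1) ^ m = (\<Sum>l<Suc m. of_nat (m choose l) * x ^ l)"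
    using binomial_ring[of x 1 m] by (simp add: lessThan_Suc_atMost)
  then show ?thesis
    by (simp add: add.commute)
qed

text \<open>After expanding \<open>(N + 1)\<^sup>n\<^sup>+\<^sup>1\<^sup>-\<^sup>k\<close> and swapping the sums, each power \<open>N\<^sup>l\<close> with
  \<open>l < n\<close> is multiplied by a vanishing Bernoulli recurrence.\<close>
lemma faulhaber_increment:
  "(\<Sum>k\<le>n. of_nat ((n + 1) choose k) * bernoulli k * (of_nat N + 1) ^ (n + 1 - k))
   = (\<Sum>k\<le>n. of_nat ((n + 1) choose k) * bernoulli k * of_nat N ^ (n + 1 - k))
     + of_nat (n + 1) * of_nat N ^ n"
proof -
  define h where
    "h k l = of_nat ((n + 1) choose k) * bernoulli k * (of_nat ((n + 1 - k) choose l) * (of_nat N :: rat) ^ l)"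
    for k l
  have expand: "of_nat ((n + 1) choose k) * bernoulli k * (of_nat N + 1) ^ (n + 1 - k)
      = of_nat ((n + 1) choose k) * bernoulli k * of_nat N ^ (n + 1 - k) + (\<Sum>l\<le>n - k. h k l)"
    if "k \<le> n" for k
  proof -
    have "{..<n + 1 - k} = {..n - k}"
      using that by auto
    then show ?thesis
      by (simp add: power_plus_1_eq h_def sum_distrib_left distrib_left del: of_nat_add)
  qed
  have collect: "(\<Sum>k\<le>n - l. h k l)
      = of_nat ((n + 1) choose l) * of_nat N ^ l * (\<Sum>k<n + 1 - l. of_nat ((n + 1 - l) choose k) * bernoulli k)"
    if "l \<le> n" for l
  proof -
    have "h k l = of_nat ((n + 1) choose l) * of_nat N ^ l * (of_nat ((n + 1 - l) choose k) * bernoulli k)"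
      if "k \<le> n - l" for k
    proof -
      have "(n + 1 choose k) * (n + 1 - k choose l) = (n + 1 choose l) * (n + 1 - l choose k)"
        using that \<open>l \<le> n\<close> by (intro choose_mult_symmetric) simp
      then have "(of_nat (n + 1 choose k) * of_nat (n + 1 - k choose l) :: rat)
          = of_nat (n + 1 choose l) * of_nat (n + 1 - l choose k)"
        by (metis of_nat_mult)
      then show ?thesis
        unfolding h_def by (simp add: algebra_simps)
    qed
    moreover have "{..<n + 1 - l} = {..n - l}"
      using that by auto
    ultimately show ?thesis
      by (simp add: sum_distrib_left)
  qed
  have "(\<Sum>k\<le>n. of_nat ((n + 1) choose k) * bernoulli k * (of_nat N + 1) ^ (n + 1 - k))
      = (\<Sum>k\<le>n. of_nat ((n + 1) choose k) * bernoulli k * of_nat N ^ (n + 1 - k))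
        + (\<Sum>k\<le>n. \<Sum>l\<le>n - k. h k l)"
    by (simp only: sum.distrib[symmetric]) (intro sum.cong refl, rule expand, simp)
  also have "(\<Sum>k\<le>n. \<Sum>l\<le>n - k. h k l) = (\<Sum>l\<le>n. \<Sum>k\<le>n - l. h k l)"
    by (rule sum_triangle_swap)
  also have "\<dots> = (\<Sum>l\<in>{n}. \<Sum>k\<le>n - l. h k l)"
    by (rule sum.mono_neutral_right) (auto simp: collect bernoulli_recurrence)
  also have "\<dots> = of_nat (n + 1) * of_nat N ^ n"
    by (simp add: h_def)
  finally show ?thesis .
qed

lemma faulhaber_scaled:
  "of_nat (n + 1) * (\<Sum>a<N. of_nat a ^ n)
   = (\<Sum>k\<le>n. of_nat ((n + 1) choose k) * bernoulli k * (of_nat N :: rat) ^ (n + 1 - k))"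
proof (induction N)
  case 0
  show ?case
    by (auto intro: sum.neutral)
next
  case (Suc N)
  have "of_nat (n + 1) * (\<Sum>a<Suc N. of_nat a ^ n)
      = of_nat (n + 1) * (\<Sum>a<N. of_nat a ^ n) + of_nat (n + 1) * (of_nat N :: rat) ^ n"
    by (simp add: algebra_simps)
  also have "\<dots> = (\<Sum>k\<le>n. of_nat ((n + 1) choose k) * bernoulli k * (of_nat N + 1) ^ (n + 1 - k))"
    unfolding Suc faulhaber_increment by simp
  finally show ?case
    by (simp add: add.commute)
qed

lemma of_nat_Suc_choose_div:
  assumes "k \<le> n"
  shows "of_nat ((n + 1) choose k) / of_nat (n + 1) = (of_nat (n choose k) / of_nat (n + 1 - k) :: 'a::field_char_0)"
proof -
  have "(n + 1 - k) * ((n + 1) choose k) = (n + 1) * (n choose k)"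
    using binomial_absorb_comp[of "n + 1" k] by simp
  then have "(of_nat ((n + 1) choose k) * of_nat (n + 1 - k) :: 'a) = of_nat (n choose k) * of_nat (n + 1)"
    by (metis mult.commute of_nat_mult)
  moreover have "(of_nat (n + 1) :: 'a) \<noteq> 0" "(of_nat (n + 1 - k) :: 'a) \<noteq> 0"
    using assms by (simp_all only: of_nat_eq_0_iff)
  ultimately show ?thesis
    by (metis frac_eq_eq)
qed

lemma faulhaber:
  "(\<Sum>a<N. (of_nat a :: rat) ^ n)
   = (\<Sum>k\<le>n. of_nat (n choose k) * bernoulli k * of_nat N ^ (n + 1 - k) / of_nat (n + 1 - k))"
proof -
  have "(\<Sum>a<N. (of_nat a :: rat) ^ n)
      = (\<Sum>k\<le>n. of_nat ((n + 1) choose k) * bernoulli k * of_nat N ^ (n + 1 - k)) / of_nat (n + 1)"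
    using faulhaber_scaled[of n N] by (simp add: field_simps)
  also have "\<dots> = (\<Sum>k\<le>n. (of_nat ((n + 1) choose k) / of_nat (n + 1)) * (bernoulli k * of_nat N ^ (n + 1 - k)))"
    by (simp add: sum_divide_distrib mult.assoc)
  also have "\<dots> = (\<Sum>k\<le>n. (of_nat (n choose k) / of_nat (n + 1 - k)) * (bernoulli k * of_nat N ^ (n + 1 - k)))"
    by (intro sum.cong refl) (simp only: of_nat_Suc_choose_div atMost_iff)
  finally show ?thesis
    by (simp add: mult.assoc)
qed

lemma bernoulli_eq_sum_powers:
  "of_nat N * bernoulli n
   = (\<Sum>a<N. of_nat a ^ n)
     - (\<Sum>k<n. of_nat (n choose k) * (of_nat N * bernoulli k) * (of_nat N ^ (n - k) / of_nat (n + 1 - k)))"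
proof -
  have "(\<Sum>k<n. of_nat (n choose k) * bernoulli k * of_nat N ^ (n + 1 - k) / of_nat (n + 1 - k))
      = (\<Sum>k<n. of_nat (n choose k) * (of_nat N * bernoulli k) * (of_nat N ^ (n - k) / of_nat (n + 1 - k)))"
  proof (intro sum.cong refl)
    fix k
    assume "k \<in> {..<n}"
    then have "n + 1 - k = Suc (n - k)"
      by auto
    then show "of_nat (n choose k) * bernoulli k * of_nat N ^ (n + 1 - k) / of_nat (n + 1 - k)
        = of_nat (n choose k) * (of_nat N * bernoulli k) * (of_nat N ^ (n - k) / (of_nat (n + 1 - k) :: rat))"
      by (simp add: field_simps)
  qed
  then show ?thesis
    by (simp add: faulhaber lessThan_Suc_atMost[symmetric] mult.commute)
qed

section \<open>The von Staudt--Clausen congruence\<close>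

definition p_integral :: "nat \<Rightarrow> rat \<Rightarrow> bool" where
  "p_integral p r \<longleftrightarrow> (\<exists>a b. b \<noteq> 0 \<and> \<not> int p dvd b \<and> r = of_int a / of_int b)"

context
  fixes p :: nat
  assumes p: "prime p"
begin

lemma p_integral_of_int: "p_integral p (of_int a)"
  unfolding p_integral_def using p
  by (intro exI[of _ a] exI[of _ 1]) (auto simp: prime_gt_1_nat)

lemma p_integral_of_nat: "p_integral p (of_nat a)"
  using p_integral_of_int[of "int a"] by simp

lemma p_integral_add_mult:
  assumes "p_integral p r" "p_integral p s"
  shows "p_integral p (r + s)" "p_integral p (r * s)"
proof -
  obtain a b c d where r: "b \<noteq> 0" "\<not> int p dvd b" "r = of_int a / of_int b"
    and s: "d \<noteq> 0" "\<not> int p dvd d" "s = of_int c / of_int d"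
    using assms unfolding p_integral_def by blast
  have "\<not> int p dvd b * d"
    using r s p by (simp add: prime_dvd_mult_iff)
  moreover have "r + s = of_int (a * d + c * b) / of_int (b * d)" "r * s = of_int (a * c) / of_int (b * d)"
    using r s by (simp_all add: field_simps)
  ultimately show "p_integral p (r + s)" "p_integral p (r * s)"
    unfolding p_integral_def using r s by (metis mult_eq_0_iff)+
qed

lemma p_integral_diff:
  assumes "p_integral p r" "p_integral p s"
  shows "p_integral p (r - s)"
  using p_integral_add_mult[OF assms(1) p_integral_add_mult(2)[OF p_integral_of_int[of "-1"] assms(2)]]
  by simp

lemma p_integral_sum:
  "(\<And>x. x \<in> A \<Longrightarrow> p_integral p (f x)) \<Longrightarrow> p_integral p (\<Sum>x\<in>A. f x)"
  by (induction A rule: infinite_finite_induct)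
    (simp_all add: p_integral_add_mult p_integral_of_nat[of 0, simplified])

lemma p_integral_power_div:
  assumes "0 < d" and "multiplicity p d \<le> e"
  shows "p_integral p (of_nat p ^ e / of_nat d)"
proof -
  obtain u where u: "d = p ^ multiplicity p d * u" "\<not> p dvd u"
    using multiplicity_decompose'[of d p] assms p by (metis not_prime_unit not_gr0)
  define v where "v = multiplicity p d"
  have "u \<noteq> 0"
    using u(1) assms(1) by (metis mult_0_right not_gr0)
  have "(of_nat d :: rat) = of_nat p ^ v * of_nat u"
    using u(1) unfolding v_def by (metis of_nat_mult of_nat_power)
  moreover have "(of_nat p ^ e :: rat) = of_nat p ^ (e - v) * of_nat p ^ v"
    using assms(2) unfolding v_def by (simp flip: power_add)
  ultimately have "(of_nat p ^ e / of_nat d :: rat) = of_int (int p ^ (e - v)) / of_int (int u)"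
    using p by (simp add: prime_gt_0_nat)
  then show ?thesis
    unfolding p_integral_def using u(2) \<open>u \<noteq> 0\<close>
    by (intro exI[of _ "int p ^ (e - v)"] exI[of _ "int u"]) auto
qed

lemma not_p_integral_inverse: "\<not> p_integral p (1 / of_nat p)"
proof
  assume "p_integral p (1 / of_nat p)"
  then obtain a b where ab: "b \<noteq> 0" "\<not> int p dvd b" "1 / of_nat p = (of_int a / of_int b :: rat)"
    unfolding p_integral_def by blast
  then have "(of_int b :: rat) = of_int (int p * a)"
    using p prime_gt_0_nat[OF p] by (simp add: field_simps)
  then have "b = int p * a"
    by (simp only: of_int_eq_iff)
  then show False
    using ab(2) by simp
qed

lemma multiplicity_le_minus_1:
  assumes "0 < d"
  shows "multiplicity p d \<le> d - 1"
proof -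
  define v where "v = multiplicity p d"
  have "p ^ v \<le> d"
    using assms by (simp add: v_def multiplicity_dvd dvd_imp_le)
  moreover have "v < 2 ^ v"
    by (rule less_exp)
  moreover have "2 ^ v \<le> p ^ v"
    using p prime_ge_2_nat power_mono by blast
  ultimately show ?thesis
    unfolding v_def by linarith
qed

lemma multiplicity_le_minus_2:
  assumes "2 \<le> d" and "\<not> (p = 2 \<and> d = 2)"
  shows "multiplicity p d \<le> d - 2"
proof (rule ccontr)
  assume "\<not> ?thesis"
  then have "p ^ (d - 1) \<le> p ^ multiplicity p d"
    using prime_gt_0_nat[OF p] by (intro power_increasing) auto
  also have "\<dots> \<le> d"
    using assms by (simp add: multiplicity_dvd dvd_imp_le)
  finally have le: "p ^ (d - 1) \<le> d" .
  have "2 \<le> p"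
    using p prime_ge_2_nat by blast
  show False
  proof (cases "d = 2")
    case True
    then show False
      using le assms \<open>2 \<le> p\<close> by simp
  next
    case False
    then have "d < 2 * 2 ^ (d - 2)"
      using assms(1) less_exp[of "d - 2"] by linarith
    also have "2 * 2 ^ (d - 2) = (2::nat) ^ (d - 1)"
      using False assms(1) by (simp flip: power_Suc)
    also have "\<dots> \<le> p ^ (d - 1)"
      using \<open>2 \<le> p\<close> by (rule power_mono) simp
    finally show False
      using le by linarith
  qed
qed

lemma p_integral_p_times_bernoulli: "p_integral p (of_nat p * bernoulli n)"
proof (induction n rule: less_induct)
  case (less n)
  have summand: "p_integral p (of_nat (n choose k) * (of_nat p * bernoulli k) * (of_nat p ^ (n - k) / of_nat (n + 1 - k)))"
    if "k < n" for k
  proof (rule p_integral_add_mult(2))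
    show "p_integral p (of_nat (n choose k) * (of_nat p * bernoulli k))"
      using that less by (rule_tac p_integral_add_mult(2)[OF p_integral_of_nat]) auto
    show "p_integral p (of_nat p ^ (n - k) / of_nat (n + 1 - k))"
      using that multiplicity_le_minus_1[of "n + 1 - k"] by (intro p_integral_power_div) auto
  qed
  have "p_integral p (\<Sum>k<n. of_nat (n choose k) * (of_nat p * bernoulli k) * (of_nat p ^ (n - k) / of_nat (n + 1 - k)))"
    using summand by (intro p_integral_sum) simp
  moreover have "p_integral p (\<Sum>a<p. of_nat a ^ n)"
    using p_integral_of_nat[of "\<Sum>a<p. a ^ n"] by simp
  ultimately show ?case
    unfolding bernoulli_eq_sum_powers[of p n] by (intro p_integral_diff)
qed

lemma prime_dvd_sum_powers_plus_1:
  assumes "(p - 1) dvd m" and "1 \<le> m"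
  shows "p dvd (\<Sum>a<p. a ^ m) + 1"
proof -
  obtain t where m: "m = (p - 1) * t"
    using assms(1) by blast
  have "[a ^ m = (if a = 0 then 0 else 1)] (mod p)" if "a < p" for a
  proof (cases "a = 0")
    case True
    then show ?thesis
      using assms(2) by (cases m) auto
  next
    case False
    with that have "\<not> p dvd a"
      by (auto dest: dvd_imp_le)
    then have "[a ^ (p - 1) = 1] (mod p)"
      using fermat_theorem p by blast
    then have "[(a ^ (p - 1)) ^ t = 1 ^ t] (mod p)"
      by (rule cong_pow)
    then show ?thesis
      using False by (simp add: m power_mult)
  qed
  then have "[(\<Sum>a<p. a ^ m) = (\<Sum>a<p. if a = 0 then 0 else 1)] (mod p)"
    by (intro cong_sum) auto
  moreover have "(\<Sum>a<Suc n. if a = 0 then 0 else 1 :: nat) = n" for n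
    by (induction n) auto
  from this[of "p - 1"] have "(\<Sum>a<p. if a = 0 then 0 else 1 :: nat) = p - 1"
    using prime_gt_0_nat[OF p] by simp
  ultimately have "[(\<Sum>a<p. a ^ m) + 1 = p - 1 + 1] (mod p)"
    by (intro cong_add) auto
  then show ?thesis
    using prime_gt_0_nat[OF p] by (simp add: cong_0_iff[symmetric] cong_def)
qed

text \<open>This is where \<open>m\<close> must be even: for \<open>p = 2\<close> and \<open>k = m - 1\<close> the summand is
  \<open>(m / 2) \<cdot> 2 B\<^sub>m\<^sub>-\<^sub>1\<close>.\<close>
lemma p_integral_faulhaber_summand:
  assumes "even m" "k < m"
  shows "p_integral p
    (of_nat (m choose k) * (of_nat p * bernoulli k) * (of_nat p ^ (m - k) / of_nat (m + 1 - k)) / of_nat p)"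
proof (cases "p = 2 \<and> k = m - 1")
  case True
  then have "m choose k = m" "m - k = 1" "m + 1 - k = 2"
    using assms binomial_symmetric[of 1 m] by auto
  then have "of_nat (m choose k) * (of_nat p * bernoulli k) * (of_nat p ^ (m - k) / of_nat (m + 1 - k)) / of_nat p
      = of_nat (m div 2) * (of_nat p * bernoulli k)"
    using True assms(1) by (auto elim!: evenE)
  then show ?thesis
    by (simp add: p_integral_add_mult p_integral_of_nat p_integral_p_times_bernoulli)
next
  case False
  then have "multiplicity p (m + 1 - k) \<le> m + 1 - k - 2"
    using assms by (intro multiplicity_le_minus_2) auto
  then have "p_integral p (of_nat p ^ (m - k - 1) / of_nat (m + 1 - k))"
    using assms by (intro p_integral_power_div) auto
  moreover have "(of_nat p :: rat) ^ (m - k) = of_nat p * of_nat p ^ (m - k - 1)"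
    using assms by (metis Suc_diff_Suc power_Suc diff_Suc_1 zero_less_diff)
  moreover have "x * (of_nat p * y / d) / of_nat p = x * (y / d)" for x y d :: rat
    using p prime_gt_0_nat by simp
  ultimately show ?thesis
    by (metis p_integral_add_mult(2) p_integral_of_nat p_integral_p_times_bernoulli)
qed

text \<open>The local form of the von Staudt--Clausen theorem: \<open>p B\<^sub>m \<equiv> -1\<close> modulo \<open>p\<close>.\<close>
lemma p_integral_bernoulli_plus_inverse:
  assumes "even m" "2 \<le> m" "(p - 1) dvd m"
  shows "p_integral p (bernoulli m + 1 / of_nat p)"
proof -
  define S where "S = (\<Sum>a<p. a ^ m) + 1"
  define U where "U k = of_nat (m choose k) * (of_nat p * bernoulli k) * (of_nat p ^ (m - k) / of_nat (m + 1 - k))"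
    for k
  have "p > 0"
    using p prime_gt_0_nat by blast
  have "of_nat p * (bernoulli m + 1 / of_nat p) = of_nat S - (\<Sum>k<m. U k)"
    using bernoulli_eq_sum_powers[of p m] \<open>p > 0\<close> by (simp add: S_def U_def distrib_left)
  then have "bernoulli m + 1 / of_nat p = (of_nat S - (\<Sum>k<m. U k)) / of_nat p"
    using \<open>p > 0\<close> by (simp add: eq_divide_eq mult.commute)
  then have "bernoulli m + 1 / of_nat p = of_nat S / of_nat p - (\<Sum>k<m. U k / of_nat p)"
    by (simp add: diff_divide_distrib sum_divide_distrib)
  moreover have "p_integral p (of_nat S / of_nat p)"
  proof -
    obtain t where "S = p * t"
      using prime_dvd_sum_powers_plus_1 assms unfolding S_def by fastforce
    then show ?thesis
      using \<open>p > 0\<close> p_integral_of_nat[of t] by simp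
  qed
  moreover have "p_integral p (U k / of_nat p)" if "k < m" for k
    unfolding U_def using assms(1) that by (rule p_integral_faulhaber_summand)
  ultimately show ?thesis
    by (metis lessThan_iff p_integral_diff p_integral_sum)
qed

lemma not_p_integral_bernoulli:
  assumes "even m" "2 \<le> m" "(p - 1) dvd m"
  shows "\<not> p_integral p (bernoulli m)"
proof
  assume "p_integral p (bernoulli m)"
  then have "p_integral p ((bernoulli m + 1 / of_nat p) - bernoulli m)"
    by (rule p_integral_diff[OF p_integral_bernoulli_plus_inverse[OF assms]])
  then show False
    using not_p_integral_inverse by simp
qed

lemma prime_dvd_bernoulli_denom:
  assumes "even m" "2 \<le> m" "(p - 1) dvd m"
  shows "int p dvd snd (quotient_of (bernoulli m))"
proof (rule ccontr)
  obtain a b where q: "quotient_of (bernoulli m) = (a, b)"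
    by (cases "quotient_of (bernoulli m)")
  assume "\<not> int p dvd snd (quotient_of (bernoulli m))"
  then have "p_integral p (bernoulli m)"
    unfolding p_integral_def using q quotient_of_denom_pos[OF q] quotient_of_div[OF q]
    by (intro exI[of _ a] exI[of _ b]) auto
  then show False
    using not_p_integral_bernoulli[OF assms] by contradiction
qed

end

section \<open>The numbers \<open>w\<^sub>m\<close> as integer combinations\<close>

lemma w_pos: "0 < w m"
  unfolding w_def using quotient_of_denom_pos'[of "\<bar>bernoulli m\<bar> / (2 * of_nat m)"] by auto

lemma w_0 [simp]: "w 0 = 1"
  by (simp add: w_def)

lemma Carmichael_dvd_of_dvd_powers:
  assumes "1 < n" and "\<And>k. 1 \<le> k \<Longrightarrow> n dvd k ^ s * (k ^ m - 1)"
  shows "Carmichael n dvd m"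
  unfolding Carmichael_def
proof (rule Lcm_least, clarify)
  fix a
  assume "a \<in> totatives n"
  then have "coprime n a" "1 \<le> a"
    by (auto simp: totatives_def coprime_commute)
  then have "n dvd a ^ m - 1"
    using assms(2)[of a] by (simp add: coprime_dvd_mult_right_iff)
  then have "[a ^ m = 1] (mod n)"
    using \<open>1 \<le> a\<close> by (simp add: cong_altdef_nat)
  then show "ord n a dvd m"
    using ord_divides by blast
qed

lemma prime_minus_1_dvd_Carmichael:
  assumes "prime p" "0 < e"
  shows "(p - 1) dvd Carmichael (p ^ e)"
  using Carmichael_prime_power[OF assms] by (cases "p = 2") auto

lemma even_Carmichael_prime_power:
  assumes "prime p" "0 < e" "p ^ e \<noteq> 2"
  shows "even (Carmichael (p ^ e))"
proof (cases "p = 2")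
  case True
  with assms have "2 \<le> e"
    by (cases e) auto
  then show ?thesis
    using True Carmichael_prime_power[OF assms(1,2)]
    by (cases "e = 2") (auto simp: dvd_power)
next
  case False
  then have "odd p"
    using assms(1) prime_odd_nat prime_ge_2_nat[OF assms(1)] by force
  then show ?thesis
    using prime_minus_1_dvd_Carmichael[OF assms(1,2)] prime_gt_0_nat[OF assms(1)]
    by (metis dvd_trans even_diff_nat odd_one odd_add)
qed

lemma prime_power_dvd_of_Carmichael_dvd:
  assumes "prime p" "0 < e" "Carmichael (p ^ e) dvd m"
  shows "p ^ e dvd p * (2 * m)"
proof (cases "p = 2")
  case True
  have "2 ^ e dvd 4 * m"
  proof (cases "2 < e")
    case True
    then have "2 ^ (e - 2) dvd m"
      using assms Carmichael_prime_power[OF assms(1,2)] \<open>p = 2\<close> by simp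
    then have "2 ^ (e - 2) * 2 ^ 2 dvd m * 4"
      by (rule mult_dvd_mono) simp
    moreover have "(2::nat) ^ (e - 2) * 2 ^ 2 = 2 ^ e"
      using True by (metis le_add_diff_inverse2 less_imp_le_nat power_add)
    ultimately show ?thesis
      by (metis mult.commute)
  next
    case False
    then have "2 ^ e dvd (2::nat) ^ 2"
      by (intro le_imp_power_dvd) simp
    then show ?thesis
      by (simp add: dvd_mult2)
  qed
  then show ?thesis
    using True by simp
next
  case False
  then have "p ^ (e - 1) dvd m"
    using assms Carmichael_prime_power[OF assms(1,2)] by (metis dvd_mult_left)
  then have "p * p ^ (e - 1) dvd p * (2 * m)"
    by (simp add: mult_dvd_mono)
  then show ?thesis
    using assms(2) by (simp flip: power_Suc)
qed

lemma dvd_w_even: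
  assumes m: "even m" "0 < m"
    and coprime: "coprime (int d) (fst (quotient_of (bernoulli m)))"
    and dvd: "int d dvd 2 * int m * snd (quotient_of (bernoulli m))"
  shows "d dvd w m"
proof -
  obtain a b where q: "quotient_of (bernoulli m) = (a, b)"
    by (cases "quotient_of (bernoulli m)")
  obtain n c where qw: "quotient_of (\<bar>bernoulli m\<bar> / (2 * of_nat m)) = (n, c)"
    by (cases "quotient_of (\<bar>bernoulli m\<bar> / (2 * of_nat m))")
  have "0 < b" "0 < c"
    using quotient_of_denom_pos[OF q] quotient_of_denom_pos[OF qw] .
  have "\<bar>bernoulli m\<bar> = of_int \<bar>a\<bar> / of_int b"
    using quotient_of_div[OF q] \<open>0 < b\<close> by simp
  then have "of_int \<bar>a\<bar> / of_int b / (2 * of_nat m) = (of_int n / of_int c :: rat)"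
    using quotient_of_div[OF qw] by simp
  then have "(of_int (\<bar>a\<bar> * c) :: rat) = of_int (n * (2 * int m * b))"
    using \<open>0 < b\<close> \<open>0 < c\<close> m(2) by (simp add: field_simps)
  then have "\<bar>a\<bar> * c = n * (2 * int m * b)"
    by (simp only: of_int_eq_iff)
  then have "int d dvd \<bar>a\<bar> * c"
    using dvd q by (metis dvd_mult2 mult.commute snd_conv)
  then have "int d dvd c"
    using coprime q by (simp add: coprime_dvd_mult_right_iff)
  moreover have "w m = nat c"
    using m qw by (simp add: w_def)
  ultimately show ?thesis
    using \<open>0 < c\<close> by (metis int_dvd_int_iff int_nat_eq less_le_not_le)
qed

lemma prime_power_dvd_w_even:
  assumes p: "prime p" and m: "even m" "2 \<le> m" "(p - 1) dvd m" and e: "p ^ e dvd p * (2 * m)"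
  shows "p ^ e dvd w m"
proof (rule dvd_w_even)
  obtain a b where q: "quotient_of (bernoulli m) = (a, b)"
    by (cases "quotient_of (bernoulli m)")
  have "int p dvd b"
    using prime_dvd_bernoulli_denom[OF p m] q by simp
  have "\<not> int p dvd a"
  proof
    assume "int p dvd a"
    then have "is_unit (int p)"
      using \<open>int p dvd b\<close> quotient_of_coprime[OF q] by (meson coprime_common_divisor)
    then show False
      using p by simp
  qed
  then have "coprime (int p) a"
    using p by (intro prime_imp_coprime) auto
  then show "coprime (int (p ^ e)) (fst (quotient_of (bernoulli m)))"
    using q by simp
  have "int (p ^ e) dvd int p * (2 * int m)"
    using e by (metis of_nat_dvd_iff of_nat_mult of_nat_numeral)
  also have "\<dots> dvd 2 * int m * b"
    using \<open>int p dvd b\<close> by (simp add: mult.commute mult_dvd_mono)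
  finally show "int (p ^ e) dvd 2 * int m * snd (quotient_of (bernoulli m))"
    using q by simp
qed (use m in auto)

lemma prime_power_dvd_w:
  assumes p: "prime p" and "0 < e" "1 \<le> m" and C: "Carmichael (p ^ e) dvd m"
  shows "p ^ e dvd w m"
proof (cases "even m")
  case True
  show ?thesis
  proof (rule prime_power_dvd_w_even[OF p True])
    show "2 \<le> m"
      using True \<open>1 \<le> m\<close> by presburger
    show "(p - 1) dvd m"
      using prime_minus_1_dvd_Carmichael[OF p \<open>0 < e\<close>] C by (rule dvd_trans)
    show "p ^ e dvd p * (2 * m)"
      using prime_power_dvd_of_Carmichael_dvd[OF p \<open>0 < e\<close> C] .
  qed
next
  case False
  then have "p ^ e = 2"
    using even_Carmichael_prime_power[OF p \<open>0 < e\<close>] C dvd_trans by blast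
  moreover have "w m = 2"
    using False odd_pos by (simp add: w_def)
  ultimately show ?thesis
    by simp
qed

lemma dvd_w:
  assumes "0 < d" "1 \<le> m" and dvd: "\<And>k. 1 \<le> k \<Longrightarrow> d dvd k ^ s * (k ^ m - 1)"
  shows "d dvd w m"
proof (rule multiplicity_le_imp_dvd)
  show "d \<noteq> 0"
    using assms(1) by simp
  fix p :: nat
  assume p: "prime p"
  define e where "e = multiplicity p d"
  show "multiplicity p d \<le> multiplicity p (w m)"
  proof (cases "e = 0")
    case False
    have "p ^ e dvd d"
      by (simp add: e_def multiplicity_dvd)
    moreover have "1 < p ^ e"
      using False prime_gt_1_nat[OF p] by (metis bot_nat_0.not_eq_extremum one_less_power)
    ultimately have "Carmichael (p ^ e) dvd m"
      using dvd by (intro Carmichael_dvd_of_dvd_powers) (auto intro: dvd_trans)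
    then have "p ^ e dvd w m"
      using False assms(2) by (intro prime_power_dvd_w[OF p]) auto
    moreover have "w m \<noteq> 0" "\<not> is_unit p"
      using w_pos[of m] p by auto
    ultimately show ?thesis
      unfolding e_def using power_dvd_iff_le_multiplicity by blast
  qed (simp add: e_def)
qed

definition int_combination :: "(nat \<Rightarrow> int) \<Rightarrow> int \<Rightarrow> bool" where
  "int_combination f z \<longleftrightarrow> (\<exists>K c. z = (\<Sum>k\<in>{1..K}. c k * f k))"

lemma int_combination_add:
  assumes "int_combination f x" "int_combination f y"
  shows "int_combination f (x + y)"
proof -
  obtain K c L d where x: "x = (\<Sum>k\<in>{1..K}. c k * f k)" and y: "y = (\<Sum>k\<in>{1..L}. d k * f k)"
    using assms unfolding int_combination_def by blast
  have extend: "(\<Sum>k\<in>{1..K}. c k * f k) = (\<Sum>k\<in>{1..max K L}. (if k \<le> K then c k else 0) * f k)"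
    for K L and c :: "nat \<Rightarrow> int"
    by (rule sum.mono_neutral_cong_left) auto
  have "x + y = (\<Sum>k\<in>{1..max K L}. ((if k \<le> K then c k else 0) + (if k \<le> L then d k else 0)) * f k)"
    unfolding x y extend[where K = K and L = L] extend[where K = L and L = K] max.commute[of L K]
    by (simp add: sum.distrib distrib_right)
  then show ?thesis
    unfolding int_combination_def by (intro exI)
qed

lemma int_combination_mult:
  assumes "int_combination f x"
  shows "int_combination f (a * x)"
proof -
  obtain K c where "x = (\<Sum>k\<in>{1..K}. c k * f k)"
    using assms unfolding int_combination_def by blast
  then have "a * x = (\<Sum>k\<in>{1..K}. (a * c k) * f k)"
    by (simp add: sum_distrib_left mult.assoc)
  then show ?thesis
    unfolding int_combination_def by (intro exI)
qed

lemma int_combination_generator: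
  assumes "1 \<le> k"
  shows "int_combination f (f k)"
proof -
  have "(\<Sum>l\<in>{1..k}. (if l = k then 1 else 0) * f l) = (\<Sum>l\<in>{1..k}. if l = k then f k else 0)"
    by (intro sum.cong) auto
  also have "\<dots> = f k"
    using assms by simp
  finally show ?thesis
    unfolding int_combination_def by (metis (no_types))
qed

lemma int_combination_least_positive:
  assumes "int_combination f z" "0 < z"
  obtains d :: nat where "0 < d" "int_combination f (int d)" "\<And>z. int_combination f z \<Longrightarrow> int d dvd z"
proof -
  define P where "P n \<longleftrightarrow> 0 < n \<and> int_combination f (int n)" for n :: nat
  define d where "d = (LEAST n. P n)"
  have "P (nat z)"
    using assms by (simp add: P_def)
  then have "P d"
    unfolding d_def by (rule LeastI)
  moreover have "int d dvd z" if z: "int_combination f z" for z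
  proof (rule ccontr)
    assume "\<not> int d dvd z"
    define r where "r = z mod int d"
    have "int_combination f r"
      unfolding r_def minus_div_mult_eq_mod[symmetric] diff_conv_add_uminus
      using z \<open>P d\<close> by (intro int_combination_add) (auto simp: P_def intro: int_combination_mult[of f _ "- _", simplified])
    moreover have "0 < r" "r < int d"
      using \<open>\<not> int d dvd z\<close> \<open>P d\<close> unfolding r_def P_def
      by (simp_all add: dvd_eq_mod_eq_0 order_le_neq_trans)
    ultimately have "d \<le> nat r"
      unfolding d_def by (intro Least_le) (simp add: P_def)
    then show False
      using \<open>0 < r\<close> \<open>r < int d\<close> by linarith
  qed
  ultimately show ?thesis
    using that unfolding P_def by blast
qed

lemma int_combination_w:
  assumes "1 \<le> m"
  shows "int_combination (\<lambda>k. int k ^ s * (int k ^ m - 1)) (int (w m))"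
proof -
  define f where "f k = int k ^ s * (int k ^ m - 1)" for k :: nat
  have "0 < f 2"
    unfolding f_def using assms by (simp add: one_less_power)
  then obtain d where d: "0 < d" "int_combination f (int d)" "\<And>z. int_combination f z \<Longrightarrow> int d dvd z"
    using int_combination_least_positive[OF int_combination_generator] by (metis one_le_numeral)
  have "d dvd w m"
  proof (rule dvd_w[OF \<open>0 < d\<close> assms])
    fix k :: nat
    assume "1 \<le> k"
    then have "int d dvd f k" and "f k = int (k ^ s * (k ^ m - 1))"
      using d(3) int_combination_generator unfolding f_def by (auto simp: of_nat_diff)
    then show "d dvd k ^ s * (k ^ m - 1)"
      by (simp only: of_nat_dvd_iff)
  qed
  then obtain t where "int (w m) = int t * int d"
    by (metis dvd_def mult.commute of_nat_mult)
  then show ?thesis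
    using int_combination_mult[OF d(2)] unfolding f_def by metis
qed

lemma w_dist_eq_combination:
  assumes "p \<noteq> q"
  shows "\<exists>K c. (\<Sum>k\<in>{1..K}. c k * (int k ^ p - int k ^ q)) = int (w (nat \<bar>int p - int q\<bar>))"
proof -
  have ordered: "\<exists>K c. (\<Sum>k\<in>{1..K}. c k * (int k ^ p - int k ^ q)) = int (w (p - q))"
    if "q < p" for p q
  proof -
    obtain K c where "int (w (p - q)) = (\<Sum>k\<in>{1..K}. c k * (int k ^ q * (int k ^ (p - q) - 1)))"
      using int_combination_w[of "p - q" q] \<open>q < p\<close> unfolding int_combination_def
      by (metis One_nat_def Suc_leI zero_less_diff)
    moreover have "int k ^ q * (int k ^ (p - q) - 1) = int k ^ p - int k ^ q" for k
      using \<open>q < p\<close> by (simp add: right_diff_distrib flip: power_add)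
    ultimately show ?thesis
      by (intro exI[of _ K] exI[of _ c]) simp
  qed
  show ?thesis
  proof (cases "q < p")
    case True
    then have "nat \<bar>int p - int q\<bar> = p - q"
      by simp
    then show ?thesis
      using ordered[OF True] by (simp only:)
  next
    case False
    with assms obtain K c where "(\<Sum>k\<in>{1..K}. c k * (int k ^ q - int k ^ p)) = int (w (q - p))"
      using ordered[of p q] by auto
    then have "(\<Sum>k\<in>{1..K}. (- c k) * (int k ^ p - int k ^ q)) = int (w (q - p))"
      by (simp add: algebra_simps sum_negf flip: sum_subtractf)
    moreover have "nat \<bar>int p - int q\<bar> = q - p"
      using False by simp
    ultimately show ?thesis
      by (metis (no_types))
  qed
qed

abbreviation w_dist :: "nat \<Rightarrow> nat \<Rightarrow> nat" where
  "w_dist p q \<equiv> w (nat \<bar>int p - int q\<bar>)"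

definition separating_coeffs :: "nat \<Rightarrow> nat \<Rightarrow> nat \<times> (nat \<Rightarrow> int)" where
  "separating_coeffs p q =
     (SOME (K, c). (\<Sum>k\<in>{1..K}. c k * (int k ^ p - int k ^ q)) = int (w_dist p q))"

definition separating_value :: "nat \<Rightarrow> nat \<Rightarrow> nat \<Rightarrow> int" where
  "separating_value p q t =
     (\<Sum>k\<in>{1..fst (separating_coeffs p q)}. snd (separating_coeffs p q) k * (int k ^ t - int k ^ q))"

lemma separating_value_self [simp]: "separating_value p q q = 0"
  by (simp add: separating_value_def)

lemma separating_value_eq_w_dist:
  assumes "p \<noteq> q"
  shows "separating_value p q p = int (w_dist p q)"
proof -
  have "\<exists>Kc. (\<Sum>k\<in>{1..fst Kc}. snd Kc k * (int k ^ p - int k ^ q)) = int (w_dist p q)"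
    using w_dist_eq_combination[OF assms] by auto
  then show ?thesis
    unfolding separating_value_def separating_coeffs_def case_prod_beta by (rule someI_ex)
qed

lemma prod_separating_value_eq_w_dist:
  assumes "distinct qs" "p \<notin> set qs"
  shows "(\<Prod>q\<leftarrow>qs. separating_value p q p) = int (\<Prod>q\<in>set qs. w_dist p q)"
proof -
  have "(\<Prod>q\<leftarrow>qs. separating_value p q p) = (\<Prod>q\<in>set qs. separating_value p q p)"
    using assms(1) by (simp add: prod.distinct_set_conv_list)
  also have "\<dots> = (\<Prod>q\<in>set qs. int (w_dist p q))"
    using assms(2) by (intro prod.cong refl separating_value_eq_w_dist) auto
  finally show ?thesis
    by simp
qed

section \<open>Integer multiples in abelian groups\<close>

lemma nsmul_0 [simp]: "nsmul 0 x = 0"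
  by (simp add: nsmul_def)

lemma nsmul_Suc: "nsmul (Suc n) x = x + nsmul n x"
  by (simp add: nsmul_def)

lemma nsmul_0_right [simp]: "nsmul n (0 :: 'a::monoid_add) = 0"
  by (induction n) (simp_all add: nsmul_Suc)

lemma nsmul_add_left: "nsmul (m + n) x = nsmul m x + nsmul n (x :: 'a::monoid_add)"
  by (induction m) (simp_all add: nsmul_Suc add.assoc)

lemma nsmul_add_right: "nsmul n (x + y) = nsmul n x + nsmul n (y :: 'a::comm_monoid_add)"
  by (induction n) (simp_all add: nsmul_Suc algebra_simps)

lemma nsmul_mult: "nsmul (m * n) x = nsmul m (nsmul n (x :: 'a::monoid_add))"
  by (induction m) (simp_all add: nsmul_Suc nsmul_add_left)

definition zsmul :: "int \<Rightarrow> 'a::ab_group_add \<Rightarrow> 'a" where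
  "zsmul a x = nsmul (nat a) x - nsmul (nat (- a)) x"

lemma zsmul_eq_nsmul_diff:
  assumes "int m - int n = a"
  shows "zsmul a x = nsmul m x - nsmul n x"
proof -
  have "nat a + n = m + nat (- a)"
    using assms by linarith
  then have "nsmul (nat a) x + nsmul n x = nsmul m x + nsmul (nat (- a)) x"
    by (metis nsmul_add_left)
  then show ?thesis
    unfolding zsmul_def by (simp add: algebra_simps)
qed

lemma zsmul_of_nat [simp]: "zsmul (int n) x = nsmul n x"
  using zsmul_eq_nsmul_diff[of n 0 "int n" x] by simp

lemma zsmul_add_right: "zsmul a (x + y) = zsmul a x + zsmul a y"
  unfolding zsmul_def by (simp add: nsmul_add_right algebra_simps)

lemma zsmul_add_left: "zsmul (a + b) x = zsmul a x + zsmul b x"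
proof -
  have "zsmul (a + b) x = nsmul (nat a + nat b) x - nsmul (nat (- a) + nat (- b)) x"
    by (rule zsmul_eq_nsmul_diff) linarith
  then show ?thesis
    unfolding zsmul_def by (simp add: nsmul_add_left algebra_simps)
qed

lemma zsmul_zsmul: "zsmul a (zsmul b x) = zsmul (a * b) x"
proof -
  interpret right: additive "zsmul a"
    by standard (rule zsmul_add_right)
  interpret left: additive "\<lambda>c. zsmul c x"
    by standard (rule zsmul_add_left)
  have nsmul: "zsmul a (nsmul n x) = zsmul (a * int n) x" for n
  proof -
    have "zsmul a (nsmul n x) = nsmul (nat a * n) x - nsmul (nat (- a) * n) x"
      unfolding zsmul_def by (simp only: nsmul_mult)
    also have "\<dots> = zsmul (a * int n) x"
      by (rule zsmul_eq_nsmul_diff[symmetric]) (cases "0 \<le> a"; simp add: algebra_simps)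
    finally show ?thesis .
  qed
  have "zsmul a (zsmul b x) = zsmul (a * int (nat b)) x - zsmul (a * int (nat (- b))) x"
    unfolding zsmul_def[of b] right.diff nsmul ..
  also have "\<dots> = zsmul (a * int (nat b) - a * int (nat (- b))) x"
    by (rule left.diff[symmetric])
  also have "a * int (nat b) - a * int (nat (- b)) = a * b"
    by (cases "0 \<le> b") auto
  finally show ?thesis .
qed

interpretation zsmul: Modules.module "zsmul :: int \<Rightarrow> 'a::ab_group_add \<Rightarrow> 'a"
  by standard (simp_all add: zsmul_add_right zsmul_add_left zsmul_zsmul, simp add: zsmul_def nsmul_def)

context additive
begin

lemma nsmul: "f (nsmul n x) = nsmul n (f x)"
  by (induction n) (simp_all add: nsmul_Suc add zero)

lemma zsmul: "f (zsmul a x) = zsmul a (f x)"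
  unfolding zsmul_def by (simp add: diff nsmul)

end

lemma is_subgroup_iff_subspace: "is_subgroup S \<longleftrightarrow> zsmul.subspace S"
proof
  assume S: "is_subgroup S"
  have nsmul: "nsmul n x \<in> S" if "x \<in> S" for n x
    using S that unfolding is_subgroup_def by (induction n) (simp_all add: nsmul_Suc)
  have "zsmul a x \<in> S" if "x \<in> S" for a x
    using S nsmul[OF that] unfolding zsmul_def is_subgroup_def by (metis diff_conv_add_uminus)
  then show "zsmul.subspace S"
    using S unfolding zsmul.subspace_def is_subgroup_def by blast
qed (simp add: is_subgroup_def zsmul.subspace_0 zsmul.subspace_add zsmul.subspace_neg)

lemma subspace_nsmul: "zsmul.subspace S \<Longrightarrow> x \<in> S \<Longrightarrow> nsmul n x \<in> S"
  using zsmul.subspace_scale[of S x "int n"] by simp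

lemma nsmul_apply: "nsmul n g x = nsmul n (g x)"
  by (induction n) (simp_all add: nsmul_Suc)

section \<open>Filtered groups with Adams operations\<close>

locale adams_filtration =
  fixes \<psi> :: "nat \<Rightarrow> 'a::ab_group_add \<Rightarrow> 'a"
    and F :: "nat \<Rightarrow> 'a set"
    and i j :: nat
  assumes add: "\<And>k x y. k > 0 \<Longrightarrow> \<psi> k (x + y) = \<psi> k x + \<psi> k y"
    and comm: "\<And>k l x. k > 0 \<Longrightarrow> l > 0 \<Longrightarrow> \<psi> k (\<psi> l x) = \<psi> l (\<psi> k x)"
    and ij: "i \<le> j"
    and top: "F i = UNIV"
    and bot: "F (Suc j) = {0}"
    and sub: "\<And>p. i \<le> p \<Longrightarrow> p \<le> Suc j \<Longrightarrow> is_subgroup (F p)"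
    and pres: "\<And>p k x. i \<le> p \<Longrightarrow> p \<le> Suc j \<Longrightarrow> k > 0 \<Longrightarrow> x \<in> F p \<Longrightarrow> \<psi> k x \<in> F p"
    and act: "\<And>p k x. i \<le> p \<Longrightarrow> p \<le> j \<Longrightarrow> k > 0 \<Longrightarrow> x \<in> F p \<Longrightarrow>
                \<psi> k x - nsmul (k ^ p) x \<in> F (Suc p)"
begin

lemma additive_psi: "0 < k \<Longrightarrow> additive (\<psi> k)"
  by unfold_locales (rule add)

lemma subspace_F: "i \<le> p \<Longrightarrow> p \<le> Suc j \<Longrightarrow> zsmul.subspace (F p)"
  using sub is_subgroup_iff_subspace by blast

lemma eigen_iff: "x \<in> eigen \<psi> p \<longleftrightarrow> (\<forall>k>0. \<psi> k x = zsmul (int k ^ p) x)"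
  by (simp add: eigen_def flip: zsmul_of_nat)

lemma subspace_eigen: "zsmul.subspace (eigen \<psi> p)"
  unfolding zsmul.subspace_def
  using additive.zero[OF additive_psi] additive.zsmul[OF additive_psi]
  by (auto simp: eigen_iff add zsmul_add_right mult.commute)

lemma act_zsmul:
  "i \<le> p \<Longrightarrow> p \<le> j \<Longrightarrow> 0 < k \<Longrightarrow> x \<in> F p \<Longrightarrow> \<psi> k x - zsmul (int k ^ p) x \<in> F (Suc p)"
  using act by (simp flip: zsmul_of_nat)

definition graded_mult :: "('a \<Rightarrow> 'a) \<Rightarrow> (nat \<Rightarrow> int) \<Rightarrow> bool" where
  "graded_mult T e \<longleftrightarrow> additive T
     \<and> (\<forall>l x. 0 < l \<longrightarrow> \<psi> l (T x) = T (\<psi> l x))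
     \<and> (\<forall>t. \<forall>x\<in>eigen \<psi> t. T x = zsmul (e t) x)
     \<and> (\<forall>t. i \<le> t \<longrightarrow> t \<le> Suc j \<longrightarrow> (\<forall>x\<in>F t. T x \<in> F t))
     \<and> (\<forall>t. i \<le> t \<longrightarrow> t \<le> j \<longrightarrow> (\<forall>x\<in>F t. T x - zsmul (e t) x \<in> F (Suc t)))"

lemma graded_multI:
  assumes "additive T"
    and "\<And>l x. 0 < l \<Longrightarrow> \<psi> l (T x) = T (\<psi> l x)"
    and "\<And>t x. x \<in> eigen \<psi> t \<Longrightarrow> T x = zsmul (e t) x"
    and "\<And>t x. i \<le> t \<Longrightarrow> t \<le> Suc j \<Longrightarrow> x \<in> F t \<Longrightarrow> T x \<in> F t"
    and "\<And>t x. i \<le> t \<Longrightarrow> t \<le> j \<Longrightarrow> x \<in> F t \<Longrightarrow> T x - zsmul (e t) x \<in> F (Suc t)"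
  shows "graded_mult T e"
  using assms unfolding graded_mult_def by blast

lemma
  assumes "graded_mult T e"
  shows graded_mult_additive: "additive T"
    and graded_mult_psi: "0 < l \<Longrightarrow> \<psi> l (T x) = T (\<psi> l x)"
    and graded_mult_eigen: "x \<in> eigen \<psi> t \<Longrightarrow> T x = zsmul (e t) x"
    and graded_mult_F: "i \<le> t \<Longrightarrow> t \<le> Suc j \<Longrightarrow> x \<in> F t \<Longrightarrow> T x \<in> F t"
    and graded_mult_graded: "i \<le> t \<Longrightarrow> t \<le> j \<Longrightarrow> x \<in> F t \<Longrightarrow> T x - zsmul (e t) x \<in> F (Suc t)"
  using assms unfolding graded_mult_def by blast+

lemma graded_mult_id: "graded_mult id (\<lambda>_. 1)"
  using zsmul.subspace_0[OF subspace_F] by (intro graded_multI) (auto intro: additive.intro)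

lemma graded_mult_comp:
  assumes T: "graded_mult T e" and S: "graded_mult S f"
  shows "graded_mult (T \<circ> S) (\<lambda>t. e t * f t)"
proof (rule graded_multI)
  interpret T: additive T
    by (rule graded_mult_additive[OF T])
  interpret S: additive S
    by (rule graded_mult_additive[OF S])
  show "additive (T \<circ> S)"
    by unfold_locales (simp add: T.add S.add)
  show "\<psi> l ((T \<circ> S) x) = (T \<circ> S) (\<psi> l x)" if "0 < l" for l x
    using that by (simp add: graded_mult_psi[OF T] graded_mult_psi[OF S])
  show "(T \<circ> S) x = zsmul (e t * f t) x" if "x \<in> eigen \<psi> t" for t x
    using that by (simp add: graded_mult_eigen[OF T] graded_mult_eigen[OF S] T.zsmul mult.commute)
  show "(T \<circ> S) x \<in> F t" if "i \<le> t" "t \<le> Suc j" "x \<in> F t" for t x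
    using that by (simp add: graded_mult_F[OF T] graded_mult_F[OF S])
  show "(T \<circ> S) x - zsmul (e t * f t) x \<in> F (Suc t)" if "i \<le> t" "t \<le> j" "x \<in> F t" for t x
  proof -
    have "(T \<circ> S) x - zsmul (e t * f t) x = T (S x - zsmul (f t) x) + zsmul (f t) (T x - zsmul (e t) x)"
      by (simp add: T.diff T.zsmul zsmul.scale_right_diff_distrib mult.commute)
    moreover have "T (S x - zsmul (f t) x) \<in> F (Suc t)"
      using that by (intro graded_mult_F[OF T] graded_mult_graded[OF S]) auto
    moreover have "T x - zsmul (e t) x \<in> F (Suc t)"
      using that by (rule graded_mult_graded[OF T])
    ultimately show ?thesis
      using that by (simp add: zsmul.subspace_add zsmul.subspace_scale subspace_F)
  qed
qed

lemma graded_mult_shift: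
  assumes "graded_mult T e" "e t = 0" "i \<le> t" "t \<le> j" "x \<in> F t"
  shows "T x \<in> F (Suc t)"
  using graded_mult_graded[OF assms(1,3-5)] assms(2) by (simp add: zsmul_def)

lemma graded_mult_adams_combination:
  "graded_mult (\<lambda>x. \<Sum>k\<in>{1..K}. zsmul (c k) (\<psi> k x - zsmul (int k ^ q) x))
     (\<lambda>t. \<Sum>k\<in>{1..K}. c k * (int k ^ t - int k ^ q))"
proof (rule graded_multI)
  show "additive (\<lambda>x. \<Sum>k\<in>{1..K}. zsmul (c k) (\<psi> k x - zsmul (int k ^ q) x))"
    by unfold_locales (simp add: add zsmul_add_right algebra_simps flip: sum.distrib)
next
  fix l :: nat and x :: 'a
  assume "0 < l"
  then interpret \<psi>: additive "\<psi> l"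
    by (rule additive_psi)
  show "\<psi> l (\<Sum>k\<in>{1..K}. zsmul (c k) (\<psi> k x - zsmul (int k ^ q) x))
      = (\<Sum>k\<in>{1..K}. zsmul (c k) (\<psi> k (\<psi> l x) - zsmul (int k ^ q) (\<psi> l x)))"
    using \<open>0 < l\<close> by (simp add: \<psi>.sum \<psi>.zsmul \<psi>.diff comm)
next
  fix t and x :: 'a
  assume "x \<in> eigen \<psi> t"
  then show "(\<Sum>k\<in>{1..K}. zsmul (c k) (\<psi> k x - zsmul (int k ^ q) x))
      = zsmul (\<Sum>k\<in>{1..K}. c k * (int k ^ t - int k ^ q)) x"
    unfolding eigen_iff zsmul.scale_sum_left
    by (intro sum.cong refl) (simp add: right_diff_distrib zsmul.scale_left_diff_distrib zsmul.scale_right_diff_distrib)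
next
  fix t and x :: 'a
  assume "i \<le> t" "t \<le> Suc j" "x \<in> F t"
  then show "(\<Sum>k\<in>{1..K}. zsmul (c k) (\<psi> k x - zsmul (int k ^ q) x)) \<in> F t"
    using subspace_F[of t]
    by (auto intro!: zsmul.subspace_sum zsmul.subspace_scale zsmul.subspace_diff pres)
next
  fix t and x :: 'a
  assume "i \<le> t" "t \<le> j" "x \<in> F t"
  have "(\<Sum>k\<in>{1..K}. zsmul (c k) (\<psi> k x - zsmul (int k ^ q) x))
        - zsmul (\<Sum>k\<in>{1..K}. c k * (int k ^ t - int k ^ q)) x
      = (\<Sum>k\<in>{1..K}. zsmul (c k) (\<psi> k x - zsmul (int k ^ t) x))"
    unfolding zsmul.scale_sum_left sum_subtractf[symmetric]
    by (intro sum.cong refl) (simp add: right_diff_distrib zsmul.scale_left_diff_distrib zsmul.scale_right_diff_distrib)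
  also have "\<dots> \<in> F (Suc t)"
    using subspace_F[of "Suc t"] \<open>i \<le> t\<close> \<open>t \<le> j\<close> \<open>x \<in> F t\<close>
    by (auto intro!: zsmul.subspace_sum zsmul.subspace_scale act_zsmul)
  finally show "(\<Sum>k\<in>{1..K}. zsmul (c k) (\<psi> k x - zsmul (int k ^ q) x))
        - zsmul (\<Sum>k\<in>{1..K}. c k * (int k ^ t - int k ^ q)) x \<in> F (Suc t)" .
qed

definition theta :: "nat \<Rightarrow> nat \<Rightarrow> 'a \<Rightarrow> 'a" where
  "theta p q x =
     (\<Sum>k\<in>{1..fst (separating_coeffs p q)}.
        zsmul (snd (separating_coeffs p q) k) (\<psi> k x - zsmul (int k ^ q) x))"

lemma graded_mult_theta: "graded_mult (theta p q) (separating_value p q)"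
  unfolding theta_def[abs_def] separating_value_def[abs_def] by (rule graded_mult_adams_combination)

definition theta_chain :: "nat \<Rightarrow> nat list \<Rightarrow> 'a \<Rightarrow> 'a" where
  "theta_chain p qs = fold (theta p) qs"

lemma graded_mult_theta_chain:
  "graded_mult (theta_chain p qs) (\<lambda>t. \<Prod>q\<leftarrow>qs. separating_value p q t)"
proof (induction qs)
  case Nil
  show ?case
    using graded_mult_id by (simp add: theta_chain_def id_def)
next
  case (Cons q qs)
  have "graded_mult (theta_chain p qs \<circ> theta p q) (\<lambda>t. (\<Prod>q\<leftarrow>qs. separating_value p q t) * separating_value p q t)"
    by (rule graded_mult_comp[OF Cons graded_mult_theta])
  then show ?case
    by (simp add: theta_chain_def mult.commute comp_def)
qed

lemma theta_chain_upt_in_F: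
  assumes "i \<le> r" "r + n \<le> Suc j" "x \<in> F r"
  shows "theta_chain p [r..<r + n] x \<in> F (r + n)"
  using assms(2)
proof (induction n)
  case 0
  then show ?case
    using assms by (simp add: theta_chain_def)
next
  case (Suc n)
  then have "theta_chain p [r..<r + n] x \<in> F (r + n)"
    by simp
  then have "theta p (r + n) (theta_chain p [r..<r + n] x) \<in> F (Suc (r + n))"
    using Suc.prems assms(1) by (intro graded_mult_shift[OF graded_mult_theta]) auto
  then show ?case
    by (simp add: theta_chain_def)
qed

lemma theta_chain_eigen:
  assumes "distinct qs" "p \<notin> set qs" "x \<in> eigen \<psi> p"
  shows "theta_chain p qs x = nsmul (\<Prod>q\<in>set qs. w_dist p q) x"
proof -
  have "theta_chain p qs x = zsmul (\<Prod>q\<leftarrow>qs. separating_value p q p) x"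
    using graded_mult_eigen[OF graded_mult_theta_chain assms(3)] .
  then show ?thesis
    by (simp only: prod_separating_value_eq_w_dist[OF assms(1,2)] zsmul_of_nat)
qed

abbreviation scale_factor :: "nat \<Rightarrow> nat" where
  "scale_factor p \<equiv> \<Prod>q\<in>{i..<p}. w (p - q)"

abbreviation iso_bound :: "nat \<Rightarrow> nat" where
  "iso_bound p \<equiv> \<Prod>q\<in>{i..j}. w_dist p q"

lemma scale_factor_eq: "scale_factor p = (\<Prod>q\<in>{i..<p}. w_dist p q)"
  by (intro prod.cong refl) (simp add: nat_diff_distrib)

lemma iso_bound_eq_scale_factor_mult:
  assumes "i \<le> p" "p \<le> j"
  shows "iso_bound p = scale_factor p * (\<Prod>q\<in>{Suc p..<Suc j}. w_dist p q)"
proof -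
  have "{i..j} = {i..<p} \<union> insert p {Suc p..<Suc j}"
    using assms by auto
  then show ?thesis
    by (simp add: scale_factor_eq prod.union_disjoint)
qed

lemma iso_bound_eq_prod_remove: "p \<in> {i..j} \<Longrightarrow> iso_bound p = (\<Prod>q\<in>{i..j} - {p}. w_dist p q)"
  using prod.remove[of "{i..j}" p "w_dist p"] by simp

lemma scale_factor_eigen_in_F:
  assumes "i \<le> p" "p \<le> j" "x \<in> eigen \<psi> p"
  shows "nsmul (scale_factor p) x \<in> F p"
proof -
  have "theta_chain p [i..<i + (p - i)] x \<in> F (i + (p - i))"
    using assms top by (intro theta_chain_upt_in_F) auto
  moreover have "theta_chain p [i..<p] x = nsmul (scale_factor p) x"
    using assms by (simp add: theta_chain_eigen scale_factor_eq)
  ultimately show ?thesis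
    using assms by simp
qed

lemma graded_kernel_killed:
  assumes "i \<le> p" "p \<le> j" "x \<in> eigen \<psi> p" "nsmul (scale_factor p) x \<in> F (Suc p)"
  shows "nsmul (iso_bound p) x = 0"
proof -
  define y where "y = nsmul (scale_factor p) x"
  define qs where "qs = [Suc p..<Suc j]"
  define V where "V = (\<Prod>q\<in>{Suc p..<Suc j}. w_dist p q)"
  have qs: "distinct qs" "p \<notin> set qs" "set qs = {Suc p..<Suc j}"
    by (auto simp: qs_def)
  have "theta_chain p [Suc p..<Suc p + (j - p)] y \<in> F (Suc p + (j - p))"
    unfolding y_def using assms by (intro theta_chain_upt_in_F) auto
  then have "theta_chain p qs y = 0"
    using assms bot by (simp add: qs_def del: upt_Suc)
  moreover have "theta_chain p qs y = nsmul V y"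
    using theta_chain_eigen[OF qs(1,2)] subspace_nsmul[OF subspace_eigen assms(3)] qs(3)
    unfolding y_def V_def by simp
  moreover have "iso_bound p = scale_factor p * V"
    unfolding V_def by (rule iso_bound_eq_scale_factor_mult[OF assms(1,2)])
  ultimately show ?thesis
    by (metis mult.commute nsmul_mult y_def)
qed

lemma graded_cokernel_killed:
  assumes "i \<le> p" "p \<le> j" "y \<in> F p"
  shows "\<exists>z\<in>eigen \<psi> p. nsmul (iso_bound p) y - nsmul (scale_factor p) z \<in> F (Suc p)"
proof -
  define qs where "qs = [Suc p..<Suc j]"
  define V where "V = (\<Prod>q\<in>{Suc p..<Suc j}. w_dist p q)"
  define \<Theta> where "\<Theta> = theta_chain p qs"
  have qs: "distinct qs" "p \<notin> set qs" "set qs = {Suc p..<Suc j}"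
    by (auto simp: qs_def)
  have \<Theta>: "graded_mult \<Theta> (\<lambda>t. \<Prod>q\<leftarrow>qs. separating_value p q t)"
    unfolding \<Theta>_def by (rule graded_mult_theta_chain)
  then interpret \<Theta>: additive \<Theta>
    by (rule graded_mult_additive)
  have "(\<Prod>q\<leftarrow>qs. separating_value p q p) = int V"
    unfolding V_def using prod_separating_value_eq_w_dist[OF qs(1,2)] qs(3) by simp
  have vanish: "\<Theta> x = 0" if "x \<in> F (Suc p)" for x
    using theta_chain_upt_in_F[of "Suc p" "j - p" x p] that assms bot by (simp add: \<Theta>_def qs_def)
  have "\<Theta> y \<in> eigen \<psi> p"
    unfolding eigen_iff
  proof (intro allI impI)
    fix l :: nat
    assume "0 < l"
    then have "\<psi> l (\<Theta> y) - zsmul (int l ^ p) (\<Theta> y) = \<Theta> (\<psi> l y - zsmul (int l ^ p) y)"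
      by (simp add: graded_mult_psi[OF \<Theta>] \<Theta>.diff \<Theta>.zsmul)
    also have "\<dots> = 0"
      using assms \<open>0 < l\<close> by (intro vanish act_zsmul)
    finally show "\<psi> l (\<Theta> y) = zsmul (int l ^ p) (\<Theta> y)"
      by simp
  qed
  moreover have "\<Theta> y - zsmul (int V) y \<in> F (Suc p)"
    using graded_mult_graded[OF \<Theta> assms] \<open>(\<Prod>q\<leftarrow>qs. separating_value p q p) = int V\<close> by simp
  then have "- zsmul (int (scale_factor p)) (\<Theta> y - zsmul (int V) y) \<in> F (Suc p)"
    using assms subspace_F[of "Suc p"] by (simp add: zsmul.subspace_neg zsmul.subspace_scale)
  moreover have "- zsmul (int (scale_factor p)) (\<Theta> y - zsmul (int V) y)
      = nsmul (iso_bound p) y - nsmul (scale_factor p) (\<Theta> y)"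
    using assms by (simp add: iso_bound_eq_scale_factor_mult V_def zsmul.scale_right_diff_distrib flip: zsmul_of_nat)
  ultimately show ?thesis
    by auto
qed

lemma N_iso_graded:
  assumes "p \<in> {i..j}"
  shows "N_iso (iso_bound p) (eigen \<psi> p) (F p) (F (Suc p)) (nsmul (scale_factor p))"
  unfolding N_iso_def using assms scale_factor_eigen_in_F graded_kernel_killed graded_cokernel_killed
  by (auto simp: nsmul_add_right)

definition eigen_families :: "(nat \<Rightarrow> 'a) set" where
  "eigen_families = {g. (\<forall>p\<in>{i..j}. g p \<in> eigen \<psi> p) \<and> (\<forall>p. p \<notin> {i..j} \<longrightarrow> g p = 0)}"

abbreviation sum_family :: "(nat \<Rightarrow> 'a) \<Rightarrow> 'a" where
  "sum_family g \<equiv> \<Sum>p\<in>{i..j}. g p"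

lemma sum_kernel_killed:
  assumes g: "g \<in> eigen_families" and "sum_family g = 0" and p: "p \<in> {i..j}"
  shows "nsmul (iso_bound p) (g p) = 0"
proof -
  define qs where "qs = [i..<p] @ [Suc p..<Suc j]"
  have qs: "distinct qs" "p \<notin> set qs" "set qs = {i..j} - {p}"
    using p by (auto simp: qs_def)
  define Q where "Q = theta_chain p qs"
  have Q: "graded_mult Q (\<lambda>t. \<Prod>q\<leftarrow>qs. separating_value p q t)"
    unfolding Q_def by (rule graded_mult_theta_chain)
  then interpret Q: additive Q
    by (rule graded_mult_additive)
  have "Q (g t) = 0" if "t \<in> {i..j} - {p}" for t
  proof -
    have "Q (g t) = zsmul (\<Prod>q\<leftarrow>qs. separating_value p q t) (g t)"
      using graded_mult_eigen[OF Q] g that unfolding eigen_families_def by auto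
    moreover have "t \<in> set qs"
      using that qs(3) by simp
    then have "(\<Prod>q\<leftarrow>qs. separating_value p q t) = 0"
      by (metis image_eqI prod_list_zero_iff separating_value_self set_map)
    ultimately show ?thesis
      by (simp add: zsmul_def)
  qed
  then have "(\<Sum>t\<in>{i..j} - {p}. Q (g t)) = 0"
    by simp
  then have "Q (sum_family g) = Q (g p)"
    using p sum.remove[of "{i..j}" p "\<lambda>t. Q (g t)"] by (simp add: Q.sum)
  also have "Q (g p) = nsmul (iso_bound p) (g p)"
    using theta_chain_eigen[OF qs(1,2)] g p qs(3)
    by (simp add: Q_def eigen_families_def iso_bound_eq_prod_remove)
  finally show ?thesis
    using assms(2) Q.zero by simp
qed

lemma eigen_in_sum_image:
  "p \<in> {i..j} \<Longrightarrow> x \<in> eigen \<psi> p \<Longrightarrow> x \<in> sum_family ` eigen_families"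
  unfolding eigen_families_def using zsmul.subspace_0[OF subspace_eigen]
  by (intro image_eqI[of _ _ "\<lambda>q. if q = p then x else 0"]) auto

lemma sum_image_add:
  assumes "x \<in> sum_family ` eigen_families" "y \<in> sum_family ` eigen_families"
  shows "x + y \<in> sum_family ` eigen_families"
proof -
  obtain g h where "g \<in> eigen_families" "h \<in> eigen_families" "x = sum_family g" "y = sum_family h"
    using assms by blast
  then show ?thesis
    unfolding eigen_families_def using zsmul.subspace_add[OF subspace_eigen]
    by (intro image_eqI[of _ _ "g + h"]) (auto simp: sum.distrib)
qed

lemma sum_cokernel_killed:
  assumes "i \<le> r" "r \<le> Suc j" "y \<in> F r"
  shows "nsmul (\<Prod>p\<in>{r..j}. iso_bound p) y \<in> sum_family ` eigen_families"
  using assms(2,1,3)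
proof (induction r arbitrary: y rule: inc_induct)
  case base
  then show ?case
    using bot ij eigen_in_sum_image[of i 0] zsmul.subspace_0[OF subspace_eigen] by simp
next
  case (step r)
  obtain z where z: "z \<in> eigen \<psi> r"
    and y': "nsmul (iso_bound r) y - nsmul (scale_factor r) z \<in> F (Suc r)"
    using graded_cokernel_killed step by force
  define M where "M = (\<Prod>p\<in>{Suc r..j}. iso_bound p)"
  have "nsmul M (nsmul (iso_bound r) y - nsmul (scale_factor r) z) \<in> sum_family ` eigen_families"
    unfolding M_def using step y' by auto
  moreover have "nsmul M (nsmul (scale_factor r) z) \<in> sum_family ` eigen_families"
    using step z subspace_eigen by (intro eigen_in_sum_image subspace_nsmul) auto
  moreover have "(\<Prod>p\<in>{r..j}. iso_bound p) = iso_bound r * M"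
    unfolding M_def using step by (simp add: prod.atLeast_Suc_atMost)
  moreover have "nsmul (iso_bound r * M) y
      = nsmul M (nsmul (iso_bound r) y - nsmul (scale_factor r) z) + nsmul M (nsmul (scale_factor r) z)"
    by (simp add: nsmul_mult mult.commute flip: nsmul_add_right)
  ultimately show ?case
    by (simp add: sum_image_add)
qed

lemma N_iso_sum:
  "N_iso (\<Prod>p\<in>{i..j}. iso_bound p) eigen_families UNIV {0} sum_family"
  unfolding N_iso_def
proof (intro conjI ballI impI)
  fix g
  assume g: "g \<in> eigen_families" "sum_family g \<in> {0}"
  show "nsmul (\<Prod>p\<in>{i..j}. iso_bound p) g = 0"
  proof
    fix p
    show "nsmul (\<Prod>p\<in>{i..j}. iso_bound p) g p = 0 p"
    proof (cases "p \<in> {i..j}")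
      case True
      then have "iso_bound p dvd (\<Prod>p\<in>{i..j}. iso_bound p)"
        by (intro dvd_prodI) auto
      then obtain k where "(\<Prod>p\<in>{i..j}. iso_bound p) = k * iso_bound p"
        by (metis dvdE mult.commute)
      then show ?thesis
        using sum_kernel_killed g True by (simp add: nsmul_apply nsmul_mult)
    next
      case False
      then show ?thesis
        using g by (simp add: nsmul_apply eigen_families_def)
    qed
  qed
next
  fix y :: 'a
  show "\<exists>g\<in>eigen_families. nsmul (\<Prod>p\<in>{i..j}. iso_bound p) y - sum_family g \<in> {0}"
    using sum_cokernel_killed[of i y] ij top by auto
qed (auto simp: sum.distrib)

end

theorem proposition6:
  fixes \<psi> :: "nat \<Rightarrow> 'a::ab_group_add \<Rightarrow> 'a"
    and F :: "nat \<Rightarrow> 'a set"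
    and i j :: nat
  assumes add: "\<And>k x y. k > 0 \<Longrightarrow> \<psi> k (x + y) = \<psi> k x + \<psi> k y"
    and comm: "\<And>k l x. k > 0 \<Longrightarrow> l > 0 \<Longrightarrow> \<psi> k (\<psi> l x) = \<psi> l (\<psi> k x)"
    and ij: "i \<le> j"
    and top: "F i = UNIV"
    and bot: "F (Suc j) = {0}"
    and sub: "\<And>p. i \<le> p \<Longrightarrow> p \<le> Suc j \<Longrightarrow> is_subgroup (F p)"
    and decr: "\<And>p. i \<le> p \<Longrightarrow> p \<le> j \<Longrightarrow> F (Suc p) \<subseteq> F p"
    and pres: "\<And>p k x. i \<le> p \<Longrightarrow> p \<le> Suc j \<Longrightarrow> k > 0 \<Longrightarrow> x \<in> F p \<Longrightarrow> \<psi> k x \<in> F p"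
    and act: "\<And>p k x. i \<le> p \<Longrightarrow> p \<le> j \<Longrightarrow> k > 0 \<Longrightarrow> x \<in> F p \<Longrightarrow>
                \<psi> k x - nsmul (k ^ p) x \<in> F (Suc p)"
  shows "(\<forall>p\<in>{i..j}.
            (\<forall>x\<in>eigen \<psi> p. nsmul (\<Prod>q\<in>{i..<p}. w (p - q)) x \<in> F p) \<and>
            N_iso (\<Prod>q\<in>{i..j}. w (nat \<bar>int p - int q\<bar>)) (eigen \<psi> p) (F p) (F (Suc p))
                  (nsmul (\<Prod>q\<in>{i..<p}. w (p - q))))
       \<and> N_iso (\<Prod>p\<in>{i..j}. \<Prod>q\<in>{i..j}. w (nat \<bar>int p - int q\<bar>))
               {g :: nat \<Rightarrow> 'a. (\<forall>p\<in>{i..j}. g p \<in> eigen \<psi> p) \<and> (\<forall>p. p \<notin> {i..j} \<longrightarrow> g p = 0)}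
               UNIV {0} (\<lambda>g. \<Sum>p\<in>{i..j}. g p)"
proof -
  interpret adams_filtration \<psi> F i j
    using add comm ij top bot sub pres act by unfold_locales
  show ?thesis
    using scale_factor_eigen_in_F N_iso_graded N_iso_sum unfolding eigen_families_def by auto
qed

end
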